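(* Let $p\ge1$, $\mathbf m=(m_1,\ldots,m_p)\in\mathbb N^p$, $n\in\mathbb N$, $x\in\mathbb C$ with $0<|x|\le1$, and $\sigma_1,\ldots,\sigma_p\in\mathbb C$ with $0<|\sigma_j|<1$. Put $\sigma_{p+1}:=1/x$. Then \[ n\int_0^x t^{n-1}dt\,\frac{dt}{1-\sigma_1t}\Big(\frac{dt}{t}\Big)^{m_1-1}\cdots\frac{dt}{1-\sigma_pt}\Big(\frac{dt}{t}\Big)^{m_p-1} =\sum_{j=0}^{p}(-1)^j\,\frac{\zeta^\star_n\big(m_1,\ldots,m_j;\tfrac{\sigma_1}{\sigma_2},\ldots,\tfrac{\sigma_j}{\sigma_{j+1}}\big)\,\mathrm{Li}_{m_p,m_{p-1},\ldots,m_{j+1}}\big(\sigma_px,\tfrac{\sigma_{p-1}}{\sigma_p},\ldots,\tfrac{\sigma_{j+1}}{\sigma_{j+2}}\big)}{\sigma_1^{n+1}\sigma_2\cdots\sigma_p}, \] where for $j=0$ the $\zeta^\star_n$ factor is $1$ and for $j=p$ the $\mathrm{Li}$ factor is $1$.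
   Context: Iterated integrals: $\int_a^b f_q(t)dt\cdots f_1(t)dt:=\int_{a<t_q<\cdots<t_1<b}f_q(t_q)\cdots f_1(t_1)\,dt_1\cdots dt_q$, along the straight segment for complex endpoints. $\zeta^\star_n(\mathbf k;\mathbf x)=\sum_{n\ge n_1\ge\cdots\ge n_r\ge1}\prod_i x_i^{n_i}/n_i^{k_i}$, $\zeta^\star_n(\emptyset)=1$. Multiple polylogarithm: $\mathrm{Li}_{k_1,\ldots,k_r}(x_1,\ldots,x_r)=\sum_{n_1>\cdots>n_r>0}x_1^{n_1}\cdots x_r^{n_r}/(n_1^{k_1}\cdots n_r^{k_r})$, $\mathrm{Li}_\emptyset=1$. *)

theory Defs
  imports "HOL-Analysis.Analysis"
begin

text \<open>Iterated integral along the straight segment from 0 to x, parametrized by t = r x,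
  r in [0,1].  The list is given innermost-first reversed: itint x (f # fs) s integrates
  f (outermost, largest variable) over [0,s] against the iterated integral of fs.\<close>
fun itint_aux :: "complex \<Rightarrow> (complex \<Rightarrow> complex) list \<Rightarrow> real \<Rightarrow> complex" where
  "itint_aux x [] s = 1"
| "itint_aux x (f # fs) s =
     integral {0..s} (\<lambda>r::real. f (of_real r * x) * x * itint_aux x fs r)"

text \<open>iterated_integral x [g_1,...,g_q] is the integral from 0 to x of
  g_1(t)dt ... g_q(t)dt in the paper's notation, i.e. over 0 < t_1 < ... < t_q < x
  with g_1 evaluated at the variable closest to 0 (written leftmost).\<close>
definition iterated_integral :: "complex \<Rightarrow> (complex \<Rightarrow> complex) list \<Rightarrow> complex" where
  "iterated_integral x ws = itint_aux x (rev ws) 1"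

text \<open>Truncated star sum: zeta_star N ks xs = sum over N >= n_1 >= ... >= n_r >= 1.\<close>
fun zeta_star :: "nat \<Rightarrow> nat list \<Rightarrow> complex list \<Rightarrow> complex" where
  "zeta_star N [] [] = 1"
| "zeta_star N (k # ks) (y # ys) =
     (\<Sum>m = 1..N. y ^ m / of_nat m ^ k * zeta_star m ks ys)"
| "zeta_star N _ _ = 0"

text \<open>Truncated multiple polylog: sum over N > n_1 > ... > n_r > 0.\<close>
fun Li_trunc :: "nat \<Rightarrow> nat list \<Rightarrow> complex list \<Rightarrow> complex" where
  "Li_trunc N [] [] = 1"
| "Li_trunc N (k # ks) (y # ys) =
     (\<Sum>m = 1..<N. y ^ m / of_nat m ^ k * Li_trunc m ks ys)"
| "Li_trunc N _ _ = 0"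

definition multi_polylog :: "nat list \<Rightarrow> complex list \<Rightarrow> complex" where
  "multi_polylog ks ys = lim (\<lambda>N. Li_trunc N ks ys)"

end

(* Parametrize the iterated integral by t = r x and expand it as a power series in the upper
   endpoint r.  Integrating against x dt/(1 - sigma t) convolves the coefficients with a geometric
   series, and each further dt/t divides the k-th coefficient by k; by induction over the forms the
   k-th coefficient, times n sigma_1^n sigma_1 ... sigma_p, is y_p^k / k^m_p times the truncated
   nested sum over n < k_1 < ... < k_(p-1) < k of the terms y_i^k_i / k_i^m_i, where
   y_i = sigma_i / sigma_(i+1) and y_p = sigma_p x.  At r = 1 the integral is therefore the full
   nested sum over n < k_1 < ... < k_p.  Removing the constraint k_1 > n by inclusion-exclusion
   writes it as an alternating sum of products of a weakly ordered sum below n (a truncated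
   zeta-star value) and a strictly ordered sum starting at 1 (a truncated multiple polylogarithm),
   and |sigma_i| < 1 makes all these sums converge geometrically, so the limit can be taken
   termwise. *)
theory Submission
  imports Defs
begin

lemma summable_powser_geometric_bound:
  fixes b :: "nat \<Rightarrow> 'a::{real_normed_div_algebra,banach}"
  assumes bnd: "\<And>k. norm (b k) \<le> C * \<theta>^k" and "0 \<le> \<theta>" and "\<theta> * norm z < 1"
  shows "summable (\<lambda>k. b k * z^k)"
proof (rule summable_comparison_test[where g="\<lambda>k. C * (\<theta> * norm z)^k"])
  show "\<exists>N. \<forall>k\<ge>N. norm (b k * z ^ k) \<le> C * (\<theta> * norm z) ^ k"
  proof (intro exI allI impI)
    fix k :: nat
    have "norm (b k * z ^ k) = norm (b k) * norm z ^ k" by (simp add: norm_mult norm_power)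
    also have "\<dots> \<le> C * \<theta>^k * norm z ^ k" by (rule mult_right_mono[OF bnd]) simp
    also have "\<dots> = C * (\<theta> * norm z) ^ k" by (simp add: power_mult_distrib)
    finally show "norm (b k * z ^ k) \<le> C * (\<theta> * norm z) ^ k" .
  qed
  show "summable (\<lambda>k. C * (\<theta> * norm z) ^ k)"
    using assms by (intro summable_mult summable_geometric) simp
qed

lemma summable_powser_geometric_bound_ball:
  fixes b :: "nat \<Rightarrow> 'a::{real_normed_div_algebra,banach}"
  assumes bnd: "\<And>k. norm (b k) \<le> C * \<theta>^k" and \<theta>: "0 \<le> \<theta>" "\<theta> < 1" and z: "norm z < 2 / (1 + \<theta>)"
  shows "summable (\<lambda>k. b k * z^k)"
proof (rule summable_powser_geometric_bound[OF bnd \<theta>(1)])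
  have "\<theta> * norm z \<le> \<theta> * (2 / (1 + \<theta>))" using z \<theta> by (intro mult_left_mono) auto
  also have "\<dots> < 1" using \<theta> by (simp add: field_simps)
  finally show "\<theta> * norm z < 1" .
qed

lemma norm_divide_of_nat_power_le: "norm (z / of_nat k ^ d) \<le> norm (z :: 'a::real_normed_field)"
proof (cases "k = 0")
  case True
  then show ?thesis by (cases d) simp_all
next
  case False
  then have "1 \<le> real k ^ d" by (intro one_le_power) auto
  then have "norm z / real k ^ d \<le> norm z / 1" using False by (intro divide_left_mono) auto
  then show ?thesis by (simp add: norm_divide norm_power)
qed

lemma uniform_norm_bound_less_1:
  fixes \<sigma> :: "'a \<Rightarrow> 'b::real_normed_vector"
  assumes "finite I" and "\<forall>i\<in>I. norm (\<sigma> i) < 1"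
  obtains \<rho> where "0 < \<rho>" "\<rho> < 1" "\<forall>i\<in>I. norm (\<sigma> i) \<le> \<rho>"
proof
  let ?\<rho> = "Max (insert (1/2) ((\<lambda>i. norm (\<sigma> i)) ` I))"
  show "0 < ?\<rho>" "\<forall>i\<in>I. norm (\<sigma> i) \<le> ?\<rho>" using assms(1) by (auto simp: Max_ge_iff Max_gr_iff)
  show "?\<rho> < 1" using assms by (simp add: Max_less_iff)
qed

lemma has_integral_powser_diffs:
  fixes b :: "nat \<Rightarrow> complex" and h :: "real \<Rightarrow> complex"
  assumes bnd: "\<And>k. norm (b k) \<le> C * \<theta>^k" and \<theta>: "0 \<le> \<theta>" "\<theta> < 1" and s: "0 \<le> s" "s \<le> 1"
    and h: "\<And>r. r \<in> {0<..<s} \<Longrightarrow> h r = (\<Sum>k. diffs b k * of_real r ^ k)"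
  shows "(h has_integral ((\<Sum>k. b k * of_real s ^ k) - b 0)) {0..s}"
proof -
  define G where "G = (\<lambda>z::complex. \<Sum>k. b k * z ^ k)"
  define G' where "G' = (\<lambda>z::complex. \<Sum>k. diffs b k * z ^ k)"
  define K :: real where "K = 2 / (1 + \<theta>)"
  have K1: "1 < K" using \<theta> by (simp add: K_def field_simps)
  have sm: "summable (\<lambda>k. b k * z ^ k)" if "norm z < K" for z
    using summable_powser_geometric_bound_ball[OF bnd \<theta>] that by (simp add: K_def)
  have der: "((\<lambda>r. G (of_real r)) has_vector_derivative G' (of_real r)) (at r within S)"
    if "\<bar>r\<bar> < K" for r :: real and S
  proof -
    have "(G has_field_derivative G' (of_real r)) (at (of_real r))"
      unfolding G_def G'_def by (rule termdiffs_strong'[OF sm]) (use that in auto)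
    then show ?thesis by (rule has_vector_derivative_real_field)
  qed
  have cont: "continuous_on {0..s} (\<lambda>r. G (of_real r))"
  proof (rule continuous_at_imp_continuous_on, intro ballI)
    fix r assume "r \<in> {0..s}"
    then have "\<bar>r\<bar> < K" using s K1 by auto
    then show "isCont (\<lambda>r. G (of_real r)) r"
      by (rule has_vector_derivative_continuous[OF der])
  qed
  have "((\<lambda>r. G' (of_real r)) has_integral (G (of_real s) - G (of_real 0))) {0..s}"
  proof (rule fundamental_theorem_of_calculus_interior[OF s(1) cont])
    fix r assume "r \<in> {0<..<s}"
    then have "\<bar>r\<bar> < K" using s K1 by auto
    then show "((\<lambda>r. G (of_real r)) has_vector_derivative G' (of_real r)) (at r)"
      by (rule der)
  qed
  moreover have "G (of_real 0) = b 0" unfolding G_def by (simp add: powser_zero)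
  ultimately have "((\<lambda>r. G' (of_real r)) has_integral (G (of_real s) - b 0)) (cbox 0 s)"
    by simp
  then have "(h has_integral (G (of_real s) - b 0)) (cbox 0 s)"
    by (rule has_integral_spike_interior) (use h in \<open>auto simp: G'_def\<close>)
  then show ?thesis by (simp add: G_def)
qed

lemma itint_aux_Cons_powser:
  fixes b :: "nat \<Rightarrow> complex"
  assumes bnd: "\<And>k. norm (b k) \<le> C * \<theta>^k" and \<theta>: "0 \<le> \<theta>" "\<theta> < 1" and b0: "b 0 = 0"
    and deriv: "\<And>r. r \<in> {0<..<1} \<Longrightarrow>
      f (of_real r * x) * x * itint_aux x l r = (\<Sum>k. diffs b k * of_real r ^ k)"
    and s: "s \<in> {0..1}"
  shows "itint_aux x (f # l) s = (\<Sum>k. b k * of_real s ^ k)"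
proof -
  have "((\<lambda>r. f (of_real r * x) * x * itint_aux x l r) has_integral
      (\<Sum>k. b k * of_real s ^ k) - b 0) {0..s}"
    by (rule has_integral_powser_diffs[OF bnd \<theta>]) (use s deriv in auto)
  then show ?thesis using b0 by (simp add: integral_unique)
qed

lemma itint_aux_Cons_inverse:
  fixes a :: "nat \<Rightarrow> complex"
  assumes x: "x \<noteq> 0"
    and ser: "\<And>r. r \<in> {0..1} \<Longrightarrow> itint_aux x l r = (\<Sum>k. a k * of_real r ^ k)"
    and bnd: "\<And>k. norm (a k) \<le> C * \<theta>^k" and \<theta>: "0 \<le> \<theta>" "\<theta> < 1" and a0: "a 0 = 0"
    and s: "s \<in> {0..1}"
  shows "itint_aux x ((\<lambda>t. 1 / t) # l) s = (\<Sum>k. a k / of_nat k * of_real s ^ k)"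
proof (rule itint_aux_Cons_powser[OF _ \<theta> _ _ s])
  show "norm (a k / of_nat k) \<le> C * \<theta>^k" for k
    using norm_divide_of_nat_power_le[of "a k" k 1] bnd[of k] by simp
  show "a 0 / of_nat 0 = 0" by simp
  fix r :: real assume r: "r \<in> {0<..<1}"
  have "summable (\<lambda>k. a k * of_real r ^ k)"
    by (rule summable_powser_geometric_bound[OF bnd \<theta>(1)])
       (use r \<theta> mult_left_le[of r \<theta>] in auto)
  then have "(\<Sum>k. a (Suc k) * of_real r ^ k) * of_real r = (\<Sum>k. a k * of_real r ^ k)"
    using a0 by (simp add: powser_split_head(2))
  moreover have "diffs (\<lambda>k. a k / of_nat k) = (\<lambda>k. a (Suc k))"
    by (simp add: diffs_def fun_eq_iff del: of_nat_Suc)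
  ultimately show "1 / (of_real r * x) * x * itint_aux x l r =
      (\<Sum>k. diffs (\<lambda>k. a k / of_nat k) k * of_real r ^ k)"
    using ser[of r] r x by (simp add: field_simps)
qed

lemma itint_aux_replicate_inverse:
  fixes a :: "nat \<Rightarrow> complex"
  assumes x: "x \<noteq> 0"
    and ser: "\<And>r. r \<in> {0..1} \<Longrightarrow> itint_aux x l r = (\<Sum>k. a k * of_real r ^ k)"
    and bnd: "\<And>k. norm (a k) \<le> C * \<theta>^k" and \<theta>: "0 \<le> \<theta>" "\<theta> < 1" and a0: "a 0 = 0"
    and s: "s \<in> {0..1}"
  shows "itint_aux x (replicate d (\<lambda>t. 1 / t) @ l) s = (\<Sum>k. a k / of_nat k ^ d * of_real s ^ k)"
  using s
proof (induction d arbitrary: s)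
  case 0
  then show ?case using ser by simp
next
  case (Suc d)
  have "norm (a k / of_nat k ^ d) \<le> C * \<theta>^k" for k
    using norm_divide_of_nat_power_le[of "a k" k d] bnd[of k] by linarith
  then have "itint_aux x ((\<lambda>t. 1 / t) # replicate d (\<lambda>t. 1 / t) @ l) s =
      (\<Sum>k. a k / of_nat k ^ d / of_nat k * of_real s ^ k)"
    using Suc.prems a0 by (intro itint_aux_Cons_inverse[OF x Suc.IH _ \<theta>]) auto
  then show ?case by (simp add: divide_divide_eq_left mult_ac)
qed

text \<open>If \<open>A(t) = \<Sum> a\<^sub>j t\<^sup>j\<close>, then
  \<open>\<integral>\<^sub>0\<^sup>r x A(t) / (1 - w t) dt = \<Sum> geom_integral_coeff w x a k r\<^sup>k\<close>.\<close>
definition geom_integral_coeff :: "complex \<Rightarrow> complex \<Rightarrow> (nat \<Rightarrow> complex) \<Rightarrow> nat \<Rightarrow> complex" where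
  "geom_integral_coeff w x a k = (1 / of_nat k) * (\<Sum>j<k. w ^ (k - 1 - j) * x * a j)"

lemma diffs_geom_integral_coeff:
  "diffs (geom_integral_coeff w x a) k = (\<Sum>j<Suc k. w ^ (k - j) * x * a j)"
  by (simp add: diffs_def geom_integral_coeff_def del: of_nat_Suc)

lemma diffs_geom_integral_coeff_Suc:
  "diffs (geom_integral_coeff w x a) (Suc k) = w * diffs (geom_integral_coeff w x a) k + x * a (Suc k)"
proof -
  have "diffs (geom_integral_coeff w x a) (Suc k) =
      (\<Sum>j<Suc k. w ^ (Suc k - j) * x * a j) + x * a (Suc k)"
    unfolding diffs_geom_integral_coeff by (simp add: sum.lessThan_Suc[of _ "Suc k"])
  also have "(\<Sum>j<Suc k. w ^ (Suc k - j) * x * a j) = w * (\<Sum>j<Suc k. w ^ (k - j) * x * a j)"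
    by (simp add: sum_distrib_left Suc_diff_le mult_ac distrib_left)
  finally show ?thesis by (simp add: diffs_geom_integral_coeff)
qed

lemma norm_geom_integral_coeff_le:
  assumes bnd: "\<And>k. norm (a k) \<le> C * \<theta>^k" and \<theta>: "0 < \<theta>"
    and w: "norm w \<le> \<theta>" and x: "norm x \<le> 1"
  shows "norm (geom_integral_coeff w x a k) \<le> C / \<theta> * \<theta>^k"
proof (cases k)
  case 0
  have "0 \<le> C" using bnd[of 0] norm_ge_zero[of "a 0"] by (simp del: norm_ge_zero)
  then show ?thesis using 0 \<theta> by (simp add: geom_integral_coeff_def)
next
  case (Suc k')
  have summand: "norm (w ^ (k - 1 - j) * x * a j) \<le> C * \<theta>^k'" if "j < k" for j
  proof -
    have "norm (w ^ (k - 1 - j) * x * a j) = norm w ^ (k' - j) * norm x * norm (a j)"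
      using Suc by (simp add: norm_mult norm_power)
    also have "\<dots> \<le> \<theta> ^ (k' - j) * 1 * (C * \<theta>^j)"
      using w x bnd[of j] \<theta> by (intro mult_mono power_mono) auto
    also have "\<dots> = C * \<theta>^(k' - j + j)" by (simp add: power_add)
    also have "k' - j + j = k'" using that Suc by simp
    finally show ?thesis .
  qed
  have "norm (geom_integral_coeff w x a k) \<le> (1 / real k) * (\<Sum>j<k. norm (w ^ (k - 1 - j) * x * a j))"
    unfolding geom_integral_coeff_def
    by (simp add: norm_mult norm_divide sum_norm_le divide_right_mono)
  also have "\<dots> \<le> (1 / real k) * (\<Sum>j<k. C * \<theta>^k')"
    by (intro mult_left_mono sum_mono summand) auto
  also have "\<dots> = C / \<theta> * \<theta>^k" using Suc \<theta> by simp
  finally show ?thesis .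
qed

lemma suminf_diffs_geom_integral_coeff:
  assumes sa: "summable (\<lambda>k. a k * z ^ k)"
    and sb: "summable (\<lambda>k. diffs (geom_integral_coeff w x a) k * z ^ k)"
  shows "(\<Sum>k. diffs (geom_integral_coeff w x a) k * z ^ k) * (1 - w * z) = x * (\<Sum>k. a k * z ^ k)"
proof -
  define b where "b = diffs (geom_integral_coeff w x a)"
  define S where "S = (\<Sum>k. b k * z ^ k)"
  define F where "F = (\<Sum>k. a k * z ^ k)"
  have "(\<lambda>k. b (Suc k) * z ^ Suc k) sums (S - x * a 0)"
    using summable_sums[OF sb] by (subst sums_Suc_iff) (simp add: S_def b_def diffs_geom_integral_coeff)
  moreover have "(\<lambda>k. b (Suc k) * z ^ Suc k) sums (w * z * S + x * (F - a 0))"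
  proof -
    have "(\<lambda>k. a (Suc k) * z ^ Suc k) sums (F - a 0)"
      using summable_sums[OF sa] by (subst sums_Suc_iff) (simp add: F_def)
    then have "(\<lambda>k. w * z * (b k * z ^ k) + x * (a (Suc k) * z ^ Suc k)) sums (w * z * S + x * (F - a 0))"
      by (intro sums_add sums_mult) (use summable_sums[OF sb] in \<open>simp add: S_def b_def\<close>)
    moreover have "(\<lambda>k. b (Suc k) * z ^ Suc k) = (\<lambda>k. w * z * (b k * z ^ k) + x * (a (Suc k) * z ^ Suc k))"
      by (simp add: b_def diffs_geom_integral_coeff_Suc algebra_simps)
    ultimately show ?thesis by simp
  qed
  ultimately have "S - x * a 0 = w * z * S + x * (F - a 0)" by (rule sums_unique2)
  then show ?thesis unfolding S_def F_def b_def by (simp add: algebra_simps)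
qed

lemma itint_aux_Cons_geometric:
  fixes a :: "nat \<Rightarrow> complex"
  assumes ser: "\<And>r. r \<in> {0..1} \<Longrightarrow> itint_aux x l r = (\<Sum>k. a k * of_real r ^ k)"
    and bnd: "\<And>k. norm (a k) \<le> C * \<theta>^k" and \<theta>: "0 < \<theta>" "\<theta> < 1"
    and \<sigma>: "norm \<sigma> \<le> \<theta>" and x: "norm x \<le> 1"
    and s: "s \<in> {0..1}"
  shows "itint_aux x ((\<lambda>t. 1 / (1 - \<sigma> * t)) # l) s =
    (\<Sum>k. geom_integral_coeff (\<sigma> * x) x a k * of_real s ^ k)"
proof -
  have \<sigma>x: "norm (\<sigma> * x) \<le> \<theta>"
    using mult_mono[OF \<sigma> x] \<theta> by (simp add: norm_mult)
  have bb: "norm (geom_integral_coeff (\<sigma> * x) x a k) \<le> C / \<theta> * \<theta>^k" for k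
    by (rule norm_geom_integral_coeff_le[OF bnd \<theta>(1) \<sigma>x x])
  have summable: "summable (\<lambda>k. c k * z ^ k)"
    if "\<And>k. norm (c k) \<le> D * \<theta>^k" "norm z \<le> 1" for c :: "nat \<Rightarrow> complex" and D z
  proof (rule summable_powser_geometric_bound[OF that(1)])
    have "\<theta> * norm z \<le> \<theta> * 1" using that(2) \<theta> by (intro mult_left_mono) auto
    then show "\<theta> * norm z < 1" using \<theta> by linarith
  qed (use \<theta> in simp)
  show ?thesis
  proof (rule itint_aux_Cons_powser[OF bb _ _ _ _ s])
    show "0 \<le> \<theta>" "\<theta> < 1" using \<theta> by auto
    show "geom_integral_coeff (\<sigma> * x) x a 0 = 0" by (simp add: geom_integral_coeff_def)
    fix r :: real assume r: "r \<in> {0<..<1}"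
    define z :: complex where "z = of_real r"
    have z: "norm z \<le> 1" using r by (simp add: z_def)
    have "summable (\<lambda>k. diffs (geom_integral_coeff (\<sigma> * x) x a) k * z ^ k)"
    proof (rule termdiff_converges)
      show "norm z < 2 / (1 + \<theta>)"
      proof -
        have "\<theta> * norm z \<le> \<theta>" using mult_left_mono[OF z, of \<theta>] \<theta> by simp
        then have "norm z + \<theta> * norm z < 2" using z \<theta> by linarith
        then show ?thesis using \<theta> by (simp add: field_simps)
      qed
      show "summable (\<lambda>k. geom_integral_coeff (\<sigma> * x) x a k * v ^ k)" if "norm v < 2 / (1 + \<theta>)" for v
        using summable_powser_geometric_bound_ball[OF bb _ _ that] \<theta> by simp
    qed
    from suminf_diffs_geom_integral_coeff[OF summable[OF bnd z] this]
    have eq: "(\<Sum>k. diffs (geom_integral_coeff (\<sigma> * x) x a) k * z ^ k) * (1 - \<sigma> * (z * x)) =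
        x * (\<Sum>k. a k * z ^ k)" by (simp add: mult_ac)
    have "norm (\<sigma> * (z * x)) < 1"
      using mult_mono[OF \<sigma>x z] \<theta> by (simp add: norm_mult mult_ac)
    then have "1 - \<sigma> * (z * x) \<noteq> 0" by auto
    with eq ser[of r] r show "1 / (1 - \<sigma> * (of_real r * x)) * x * itint_aux x l r =
        (\<Sum>k. diffs (geom_integral_coeff (\<sigma> * x) x a) k * of_real r ^ k)"
      by (simp add: z_def field_simps)
  qed
qed

lemma itint_aux_monomial:
  assumes n: "1 \<le> n" and r: "r \<in> {0..1}"
  shows "itint_aux x [\<lambda>t. t ^ (n - 1)] r = (\<Sum>k. (if k = n then x^n / of_nat n else 0) * of_real r ^ k)"
proof (rule itint_aux_Cons_powser[where C="norm (x^n / of_nat n) * 2^n" and \<theta>="1/2", OF _ _ _ _ _ r])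
  show "norm (if k = n then x^n / of_nat n else 0) \<le> norm (x^n / of_nat n) * 2^n * (1/2)^k" for k
    by (simp add: power_one_over)
  fix r' :: real
  obtain n' where n': "n = Suc n'" using n by (cases n) auto
  have "(\<lambda>k. diffs (\<lambda>k. if k = n then x^n / of_nat n else 0) k * of_real r' ^ k) =
      (\<lambda>k. if k = n' then x^n * of_real r' ^ k else 0)"
    by (rule ext) (simp add: diffs_def n' del: of_nat_Suc)
  then have "(\<Sum>k. diffs (\<lambda>k. if k = n then x^n / of_nat n else 0) k * of_real r' ^ k) =
      x^n * of_real r' ^ n'"
    using sums_single[of n' "\<lambda>k. x^n * of_real r' ^ k"] by (simp add: sums_iff)
  then show "(of_real r' * x) ^ (n - 1) * x * itint_aux x [] r' =
      (\<Sum>k. diffs (\<lambda>k. if k = n then x^n / of_nat n else 0) k * of_real r' ^ k)"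
    by (simp add: n' power_mult_distrib mult_ac)
qed (use n in auto)

text \<open>The integrand list of the theorem, outermost form first as \<^const>\<open>itint_aux\<close> expects.\<close>
fun integrands :: "(nat \<Rightarrow> complex) \<Rightarrow> (nat \<Rightarrow> nat) \<Rightarrow> nat \<Rightarrow> nat \<Rightarrow> (complex \<Rightarrow> complex) list" where
  "integrands \<sigma> m n 0 = [\<lambda>t. t ^ (n - 1)]"
| "integrands \<sigma> m n (Suc q) =
     replicate (m (Suc q) - 1) (\<lambda>t. 1 / t) @ (\<lambda>t. 1 / (1 - \<sigma> (Suc q) * t)) # integrands \<sigma> m n q"

lemma rev_integrand_list:
  "rev ((\<lambda>t. t ^ (n - 1)) #
      concat (map (\<lambda>i. (\<lambda>t. 1 / (1 - \<sigma> i * t)) # replicate (m i - 1) (\<lambda>t. 1 / t)) [1..<q+1])) =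
    integrands \<sigma> m n q"
  by (induction q) simp_all

fun itint_coeff :: "(nat \<Rightarrow> complex) \<Rightarrow> (nat \<Rightarrow> nat) \<Rightarrow> complex \<Rightarrow> nat \<Rightarrow> nat \<Rightarrow> nat \<Rightarrow> complex" where
  "itint_coeff \<sigma> m x n 0 k = (if k = n then x ^ n / of_nat n else 0)"
| "itint_coeff \<sigma> m x n (Suc q) k =
     geom_integral_coeff (\<sigma> (Suc q) * x) x (itint_coeff \<sigma> m x n q) k / of_nat k ^ (m (Suc q) - 1)"

lemma itint_aux_integrands_powser:
  assumes x: "x \<noteq> 0" "norm x \<le> 1" and n: "1 \<le> n" and \<theta>: "0 < \<theta>" "\<theta> < 1"
    and \<sigma>: "\<forall>i\<in>{1..q}. norm (\<sigma> i) \<le> \<theta>"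
  shows "(\<forall>r\<in>{0..1}. itint_aux x (integrands \<sigma> m n q) r = (\<Sum>k. itint_coeff \<sigma> m x n q k * of_real r ^ k))
    \<and> (\<exists>C. \<forall>k. norm (itint_coeff \<sigma> m x n q k) \<le> C * \<theta>^k) \<and> itint_coeff \<sigma> m x n q 0 = 0"
  using \<sigma>
proof (induction q)
  case 0
  have "norm (itint_coeff \<sigma> m x n 0 k) \<le> norm (x^n / of_nat n) / \<theta>^n * \<theta>^k" for k
    using \<theta> by auto
  then have "\<exists>C. \<forall>k. norm (itint_coeff \<sigma> m x n 0 k) \<le> C * \<theta>^k" by blast
  then show ?case using itint_aux_monomial[OF n] n by simp
next
  case (Suc q)
  from Suc obtain C where
    ser: "\<And>r. r \<in> {0..1} \<Longrightarrow> itint_aux x (integrands \<sigma> m n q) r = (\<Sum>k. itint_coeff \<sigma> m x n q k * of_real r ^ k)"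
    and bnd: "\<And>k. norm (itint_coeff \<sigma> m x n q k) \<le> C * \<theta>^k"
    by auto
  have \<sigma>q: "norm (\<sigma> (Suc q)) \<le> \<theta>" using Suc.prems by auto
  define b where "b = geom_integral_coeff (\<sigma> (Suc q) * x) x (itint_coeff \<sigma> m x n q)"
  have \<sigma>x: "norm (\<sigma> (Suc q) * x) \<le> \<theta>"
    using mult_mono[OF \<sigma>q x(2)] \<theta> by (simp add: norm_mult)
  have bnd': "norm (b k) \<le> C / \<theta> * \<theta>^k" for k
    unfolding b_def by (rule norm_geom_integral_coeff_le[OF bnd \<theta>(1) \<sigma>x x(2)])
  have b0: "b 0 = 0" by (simp add: b_def geom_integral_coeff_def)
  have "itint_aux x ((\<lambda>t. 1 / (1 - \<sigma> (Suc q) * t)) # integrands \<sigma> m n q) r = (\<Sum>k. b k * of_real r ^ k)"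
    if "r \<in> {0..1}" for r
    unfolding b_def by (rule itint_aux_Cons_geometric[OF ser bnd \<theta> \<sigma>q x(2) that])
  from itint_aux_replicate_inverse[OF x(1) this bnd' _ \<theta>(2) b0]
  have "\<forall>r\<in>{0..1}. itint_aux x (integrands \<sigma> m n (Suc q)) r =
      (\<Sum>k. itint_coeff \<sigma> m x n (Suc q) k * of_real r ^ k)"
    using \<theta> by (simp add: b_def)
  moreover have "\<exists>C'. \<forall>k. norm (itint_coeff \<sigma> m x n (Suc q) k) \<le> C' * \<theta>^k"
  proof (intro exI allI)
    fix k
    show "norm (itint_coeff \<sigma> m x n (Suc q) k) \<le> C / \<theta> * \<theta>^k"
      using norm_divide_of_nat_power_le[of "b k" k "m (Suc q) - 1"] bnd'[of k] by (simp add: b_def)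
  qed
  moreover have "itint_coeff \<sigma> m x n (Suc q) 0 = 0" by (simp add: geom_integral_coeff_def)
  ultimately show ?case by blast
qed

text \<open>\<open>strict_chain_sum c n a q N\<close> is the sum over \<open>n < k\<^sub>1 < \<dots> < k\<^sub>q < N\<close>
  of \<open>\<Prod>\<^sub>i c (a + i) k\<^sub>i\<close>, and \<open>weak_chain_sum c a j n\<close> the sum over
  \<open>n \<ge> k\<^sub>1 \<ge> \<dots> \<ge> k\<^sub>j \<ge> 1\<close> of the same products.\<close>
fun strict_chain_sum :: "(nat \<Rightarrow> nat \<Rightarrow> 'a::comm_semiring_1) \<Rightarrow> nat \<Rightarrow> nat \<Rightarrow> nat \<Rightarrow> nat \<Rightarrow> 'a" where
  "strict_chain_sum c n a 0 N = (if n < N then 1 else 0)"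
| "strict_chain_sum c n a (Suc q) N = (\<Sum>k<N. c (Suc (a + q)) k * strict_chain_sum c n a q k)"

fun weak_chain_sum :: "(nat \<Rightarrow> nat \<Rightarrow> 'a::comm_semiring_1) \<Rightarrow> nat \<Rightarrow> nat \<Rightarrow> nat \<Rightarrow> 'a" where
  "weak_chain_sum c a 0 n = 1"
| "weak_chain_sum c a (Suc j) n = (\<Sum>k=1..n. c (Suc a) k * weak_chain_sum c (Suc a) j k)"

lemma strict_chain_sum_eq_0: "N \<le> n \<Longrightarrow> strict_chain_sum c n a q N = 0"
  by (induction q arbitrary: N) auto

lemma strict_chain_sum_Suc_first:
  "strict_chain_sum c n a (Suc q) N = (\<Sum>k\<in>{Suc n..<N}. c (Suc a) k * strict_chain_sum c k (Suc a) q N)"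
proof (induction q arbitrary: N)
  case 0
  have "(\<Sum>k<N. c (Suc a) k * strict_chain_sum c n a 0 k) = (\<Sum>k\<in>{..<N} \<inter> {k. n < k}. c (Suc a) k)"
    by (simp add: sum.inter_restrict if_distrib[of "\<lambda>z. _ * z"] cong: if_cong)
  also have "{..<N} \<inter> {k. n < k} = {Suc n..<N}" by auto
  finally show ?case by simp
next
  case (Suc q)
  let ?c = "c (Suc (Suc (a + q)))" and ?S = "\<lambda>k' k. strict_chain_sum c k' (Suc a) q k"
  have "strict_chain_sum c n a (Suc (Suc q)) N =
      (\<Sum>k<N. ?c k * (\<Sum>k'\<in>{Suc n..<k}. c (Suc a) k' * ?S k' k))"
    by (simp only: strict_chain_sum.simps(2)[of c n a "Suc q"] Suc.IH add_Suc_right)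
  also have "\<dots> = (\<Sum>k<N. \<Sum>k'\<in>{Suc n..<N}. ?c k * (c (Suc a) k' * ?S k' k))"
    unfolding sum_distrib_left
    by (intro sum.cong refl sum.mono_neutral_left) (auto simp: strict_chain_sum_eq_0)
  also have "\<dots> = (\<Sum>k'\<in>{Suc n..<N}. c (Suc a) k' * (\<Sum>k<N. ?c k * ?S k' k))"
    by (subst sum.swap) (simp add: sum_distrib_left mult_ac)
  also have "\<dots> = (\<Sum>k'\<in>{Suc n..<N}. c (Suc a) k' * strict_chain_sum c k' (Suc a) (Suc q) N)"
    by simp
  finally show ?case .
qed

text \<open>Inclusion--exclusion between the constraint \<open>k\<^sub>1 > n\<close> and its complement \<open>k\<^sub>1 \<le> n\<close>.\<close>
lemma strict_chain_sum_alternating: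
  fixes c :: "nat \<Rightarrow> nat \<Rightarrow> 'a::comm_ring_1"
  shows "n < N \<Longrightarrow>
    (\<Sum>j=0..q. (-1)^j * weak_chain_sum c a j n * strict_chain_sum c 0 (a + j) (q - j) N) =
    strict_chain_sum c n a q N"
proof (induction q arbitrary: n a)
  case 0
  then show ?case by simp
next
  case (Suc q)
  let ?c = "c (Suc a)" and ?S = "\<lambda>k. strict_chain_sum c k (Suc a) q N"
  have "(\<Sum>j=0..q. (-1)^Suc j * weak_chain_sum c a (Suc j) n * strict_chain_sum c 0 (a + Suc j) (q - j) N) =
      (\<Sum>k=1..n. - (?c k * (\<Sum>j=0..q. (-1)^j * weak_chain_sum c (Suc a) j k *
                                         strict_chain_sum c 0 (Suc a + j) (q - j) N)))"
    by (simp add: sum_distrib_left sum_distrib_right sum_negf mult_ac sum.swap[of _ "{0..q}"])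
  also have "\<dots> = (\<Sum>k=1..n. - (?c k * ?S k))"
  proof (rule sum.cong[OF refl])
    fix k assume "k \<in> {1..n}"
    then have "k < N" using Suc.prems by simp
    from Suc.IH[OF this, of "Suc a"] show "- (?c k * (\<Sum>j=0..q. (-1)^j * weak_chain_sum c (Suc a) j k *
        strict_chain_sum c 0 (Suc a + j) (q - j) N)) = - (?c k * ?S k)" by simp
  qed
  also have "\<dots> = - (\<Sum>k\<in>{Suc 0..<Suc n}. ?c k * ?S k)"
    by (simp add: sum_negf atLeastLessThanSuc_atLeastAtMost)
  finally have tail: "(\<Sum>j=0..q. (-1)^Suc j * weak_chain_sum c a (Suc j) n *
      strict_chain_sum c 0 (a + Suc j) (q - j) N) = - (\<Sum>k\<in>{Suc 0..<Suc n}. ?c k * ?S k)" .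
  have head: "strict_chain_sum c 0 a (Suc q) N =
      (\<Sum>k\<in>{Suc 0..<Suc n}. ?c k * ?S k) + (\<Sum>k\<in>{Suc n..<N}. ?c k * ?S k)"
    unfolding strict_chain_sum_Suc_first using Suc.prems
    by (intro sum.atLeastLessThan_concat[symmetric]) auto
  have "(\<Sum>j=0..Suc q. (-1)^j * weak_chain_sum c a j n * strict_chain_sum c 0 (a + j) (Suc q - j) N) =
      strict_chain_sum c 0 a (Suc q) N + (\<Sum>j=0..q. (-1)^Suc j * weak_chain_sum c a (Suc j) n *
        strict_chain_sum c 0 (a + Suc j) (q - j) N)"
    by (subst sum.atLeast0_atMost_Suc_shift) simp
  also have "\<dots> = (\<Sum>k\<in>{Suc n..<N}. ?c k * ?S k)"
    unfolding head tail by (simp only: add.commute add.left_commute add_0 add.right_inverse)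
  also have "\<dots> = strict_chain_sum c n a (Suc q) N"
    by (simp only: strict_chain_sum_Suc_first)
  finally show ?case .
qed

lemma norm_strict_chain_sum_le:
  fixes c :: "nat \<Rightarrow> nat \<Rightarrow> 'a::real_normed_field"
  assumes "\<forall>i\<in>{Suc a..a+q}. \<forall>k. norm (c i k) \<le> (t i / t (Suc i))^k"
    and "\<forall>i\<in>{Suc a..Suc (a+q)}. 0 < t i \<and> t i \<le> \<rho>"
    and \<rho>\<theta>: "\<rho> < \<theta>"
  shows "\<exists>C\<ge>0. \<forall>M. norm (strict_chain_sum c 0 a q M) \<le> C * (\<theta> / t (Suc (a+q)))^M"
  using assms(1,2)
proof (induction q)
  case 0
  then have "1 \<le> \<theta> / t (Suc a)" using \<rho>\<theta> by (simp add: field_simps)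
  then have "\<forall>M. norm (strict_chain_sum c 0 a 0 M) \<le> 1 * (\<theta> / t (Suc (a+0)))^M"
    by (auto intro: one_le_power)
  then show ?case by (intro exI[of _ 1]) auto
next
  case (Suc q)
  then obtain C where C0: "C \<ge> 0"
    and C: "\<And>M. norm (strict_chain_sum c 0 a q M) \<le> C * (\<theta> / t (Suc (a+q)))^M"
    by fastforce
  define t1 where "t1 = t (Suc (a+q))"
  define t2 where "t2 = t (Suc (Suc (a+q)))"
  have t1: "0 < t1" and t2: "0 < t2" "t2 \<le> \<rho>" using Suc.prems(2) by (auto simp: t1_def t2_def)
  define r where "r = \<theta> / t2"
  have r1: "1 < r" using t2 \<rho>\<theta> by (simp add: r_def field_simps)
  have summand: "norm (c (Suc (a + q)) k * strict_chain_sum c 0 a q k) \<le> C * r^k" for k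
  proof -
    have "norm (c (Suc (a + q)) k * strict_chain_sum c 0 a q k) \<le> (t1 / t2)^k * (C * (\<theta> / t1)^k)"
      unfolding norm_mult using C[of k] Suc.prems(1) t1 t2
      by (intro mult_mono) (auto simp: t1_def t2_def)
    also have "\<dots> = C * r^k" using t1 t2 by (simp add: r_def power_divide field_simps)
    finally show ?thesis .
  qed
  show ?case
  proof (intro exI[of _ "C / (r - 1)"] conjI allI)
    show "0 \<le> C / (r - 1)" using C0 r1 by simp
    fix M
    have "norm (strict_chain_sum c 0 a (Suc q) M) \<le> (\<Sum>k<M. C * r^k)"
      unfolding strict_chain_sum.simps by (intro order_trans[OF norm_sum sum_mono] summand)
    also have "\<dots> = C * ((r^M - 1) / (r - 1))"
      using r1 by (simp add: sum_distrib_left[symmetric] sum_gp_strict field_simps)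
    also have "\<dots> \<le> C * (r^M / (r - 1))" using C0 r1 by (intro mult_left_mono divide_right_mono) auto
    finally show "norm (strict_chain_sum c 0 a (Suc q) M) \<le> C / (r - 1) * (\<theta> / t (Suc (a + Suc q)))^M"
      by (simp add: r_def t2_def)
  qed
qed

lemma convergent_strict_chain_sum:
  fixes c :: "nat \<Rightarrow> nat \<Rightarrow> 'a::{real_normed_field,banach}"
  assumes c: "\<forall>i\<in>{Suc a..a+q}. \<forall>k. norm (c i k) \<le> (t i / t (Suc i))^k"
    and c_top: "\<forall>k. norm (c (Suc (a+q)) k) \<le> t (Suc (a+q)) ^ k"
    and t: "\<forall>i\<in>{Suc a..Suc (a+q)}. 0 < t i \<and> t i \<le> \<rho>" and \<rho>: "\<rho> < 1"
  shows "convergent (\<lambda>N. strict_chain_sum c 0 a (Suc q) N)"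
proof -
  define \<theta> where "\<theta> = (1 + \<rho>) / 2"
  obtain C where "\<And>M. norm (strict_chain_sum c 0 a q M) \<le> C * (\<theta> / t (Suc (a+q)))^M"
    using norm_strict_chain_sum_le[OF c t, of \<theta>] \<rho> by (auto simp: \<theta>_def)
  moreover have tq: "0 < t (Suc (a+q))" "t (Suc (a+q)) \<le> \<rho>" using t by auto
  ultimately have "norm (c (Suc (a+q)) k * strict_chain_sum c 0 a q k) \<le> C * \<theta>^k" for k
  proof -
    have "norm (c (Suc (a+q)) k * strict_chain_sum c 0 a q k) \<le>
        t (Suc (a+q)) ^ k * (C * (\<theta> / t (Suc (a+q)))^k)"
      unfolding norm_mult using tq c_top \<open>\<And>M. norm (strict_chain_sum c 0 a q M) \<le> _\<close>[of k]
      by (intro mult_mono) auto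
    also have "\<dots> = C * \<theta>^k" using tq by (simp add: power_divide)
    finally show ?thesis .
  qed
  moreover have "0 \<le> \<theta>" "\<theta> < 1" using tq \<rho> by (auto simp: \<theta>_def)
  ultimately have "summable (\<lambda>k. c (Suc (a+q)) k * strict_chain_sum c 0 a q k)"
    by (intro summable_comparison_test[OF _ summable_mult[OF summable_geometric]]) auto
  then show ?thesis by (simp add: summable_iff_convergent)
qed

lemma sums_strict_chain_sum_alternating:
  fixes c :: "nat \<Rightarrow> nat \<Rightarrow> 'a::real_normed_field"
  assumes lim: "\<And>j. j \<le> Suc q \<Longrightarrow> (\<lambda>N. strict_chain_sum c 0 j (Suc q - j) N) \<longlonglongrightarrow> L j"
  shows "(\<lambda>k. c (Suc q) k * strict_chain_sum c n 0 q k) sums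
    (\<Sum>j=0..Suc q. (-1)^j * weak_chain_sum c 0 j n * L j)"
proof -
  have "eventually (\<lambda>N. (\<Sum>j=0..Suc q. (-1)^j * weak_chain_sum c 0 j n * strict_chain_sum c 0 j (Suc q - j) N) =
      (\<Sum>k<N. c (Suc q) k * strict_chain_sum c n 0 q k)) sequentially"
    using eventually_gt_at_top[of n]
    by eventually_elim (use strict_chain_sum_alternating[of n _ c 0 "Suc q"] in simp)
  moreover have "(\<lambda>N. \<Sum>j=0..Suc q. (-1)^j * weak_chain_sum c 0 j n * strict_chain_sum c 0 j (Suc q - j) N)
      \<longlonglongrightarrow> (\<Sum>j=0..Suc q. (-1)^j * weak_chain_sum c 0 j n * L j)"
    using lim by (intro tendsto_sum tendsto_mult_left) auto
  ultimately show ?thesis unfolding sums_def by (rule Lim_transform_eventually[rotated])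
qed

definition polylog_term :: "(nat \<Rightarrow> complex) \<Rightarrow> (nat \<Rightarrow> nat) \<Rightarrow> nat \<Rightarrow> nat \<Rightarrow> complex" where
  "polylog_term y m i k = y i ^ k / of_nat k ^ m i"

lemma zeta_star_eq_weak_chain_sum:
  "zeta_star n (map m [Suc a..<Suc (a + j)]) (map y [Suc a..<Suc (a + j)]) =
    weak_chain_sum (polylog_term y m) a j n"
proof (induction j arbitrary: a n)
  case (Suc j)
  have "[Suc a..<Suc (a + Suc j)] = Suc a # [Suc (Suc a)..<Suc (Suc a + j)]"
    by (simp add: upt_conv_Cons)
  then show ?case using Suc.IH[of _ "Suc a"] by (simp add: polylog_term_def[of y m "Suc a"] del: upt_Suc)
qed simp

lemma Li_trunc_eq_strict_chain_sum:
  "0 < N \<Longrightarrow> Li_trunc N (map m (rev [Suc a..<Suc (a + q)])) (map y (rev [Suc a..<Suc (a + q)])) =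
    strict_chain_sum (polylog_term y m) 0 a q N"
proof (induction q arbitrary: N)
  case (Suc q)
  have "Li_trunc N (map m (rev [Suc a..<Suc (a + Suc q)])) (map y (rev [Suc a..<Suc (a + Suc q)])) =
      (\<Sum>k\<in>{Suc 0..<N}. polylog_term y m (Suc (a + q)) k * strict_chain_sum (polylog_term y m) 0 a q k)"
  proof -
    have "rev [Suc a..<Suc (a + Suc q)] = Suc (a + q) # rev [Suc a..<Suc (a + q)]" by simp
    moreover have "Li_trunc k (map m (rev [Suc a..<Suc (a + q)])) (map y (rev [Suc a..<Suc (a + q)])) =
        strict_chain_sum (polylog_term y m) 0 a q k" if "k \<in> {Suc 0..<N}" for k
      using Suc.IH that by simp
    ultimately show ?thesis by (simp add: polylog_term_def[of y m "Suc (a + q)"] del: upt_Suc)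
  qed
  also have "\<dots> = strict_chain_sum (polylog_term y m) 0 a (Suc q) N"
    by (simp add: sum_shift_lb_Suc0_0_upt strict_chain_sum_eq_0 atLeast0LessThan)
  finally show ?case .
qed simp

lemma geom_integral_coeff_scaled:
  assumes s: "s \<noteq> 0"
  shows "geom_integral_coeff (s * x) x (\<lambda>j. (t * x)^j * B j) k =
    (s * x)^k * (\<Sum>j<k. (t / s)^j * B j) / (of_nat k * s)"
proof -
  have "(s * x) ^ (k - 1 - j) * x * ((t * x)^j * B j) = (s * x)^k / s * ((t / s)^j * B j)"
    if "j < k" for j
  proof -
    obtain d where k: "k = Suc (j + d)" using \<open>j < k\<close> by (metis less_iff_Suc_add add.commute)
    then have "k - 1 - j = d" by simp
    then show ?thesis using s by (simp add: k power_add power_mult_distrib power_divide field_simps)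
  qed
  then have "(\<Sum>j<k. (s * x) ^ (k - 1 - j) * x * ((t * x)^j * B j)) =
      (s * x)^k / s * (\<Sum>j<k. (t / s)^j * B j)"
    by (simp add: sum_distrib_left)
  then show ?thesis by (simp add: geom_integral_coeff_def)
qed

lemma itint_coeff_closed_form:
  assumes n: "1 \<le> n" and \<sigma>: "\<forall>i\<in>{1..Q}. \<sigma> i \<noteq> 0" and m: "\<forall>i\<in>{1..Q}. 1 \<le> m i"
    and y: "\<forall>i\<in>{1..<Q}. y i = \<sigma> i / \<sigma> (Suc i)"
  shows "1 \<le> q \<Longrightarrow> q \<le> Q \<Longrightarrow> itint_coeff \<sigma> m x n q k =
    (\<sigma> q * x)^k * strict_chain_sum (polylog_term y m) n 0 (q - 1) k /
      (of_nat k ^ m q * (of_nat n * \<sigma> 1 ^ n * (\<Prod>i=1..q. \<sigma> i)))"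
proof (induction q arbitrary: k)
  case (Suc q)
  have \<sigma>q: "\<sigma> (Suc q) \<noteq> 0" and mq: "1 \<le> m (Suc q)" using Suc.prems \<sigma> m by auto
  have step: "itint_coeff \<sigma> m x n (Suc q) k = (\<sigma> (Suc q) * x)^k *
      (\<Sum>j<k. (t / \<sigma> (Suc q))^j * B j) / (of_nat k ^ m (Suc q) * \<sigma> (Suc q))"
    if "itint_coeff \<sigma> m x n q = (\<lambda>j. (t * x)^j * B j)" for t B
  proof -
    have "(of_nat k :: complex) ^ m (Suc q) = of_nat k * of_nat k ^ (m (Suc q) - 1)"
      using mq by (metis Suc_diff_1 less_le_trans zero_less_one power_Suc)
    then show ?thesis
      using that geom_integral_coeff_scaled[OF \<sigma>q, of x t B k] by (simp add: field_simps)
  qed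
  show ?case
  proof (cases "q = 0")
    case True
    have "itint_coeff \<sigma> m x n q = (\<lambda>j. (1 * x)^j * (if j = n then 1 / of_nat n else 0))"
      using True by auto
    from step[OF this] show ?thesis
      using True n \<sigma>q by (simp add: if_distrib[of "\<lambda>z. _ * z"] power_one_over field_simps cong: if_cong)
  next
    case False
    define E :: complex where "E = of_nat n * \<sigma> 1 ^ n * (\<Prod>i=1..q. \<sigma> i)"
    have "E \<noteq> 0" using n \<sigma> Suc.prems by (auto simp: E_def)
    have "itint_coeff \<sigma> m x n q =
        (\<lambda>j. (\<sigma> q * x)^j * (strict_chain_sum (polylog_term y m) n 0 (q - 1) j / (of_nat j ^ m q * E)))"
      using Suc.IH False Suc.prems by (auto simp: E_def)
    note step[OF this]
    also have "(\<Sum>j<k. (\<sigma> q / \<sigma> (Suc q))^j *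
        (strict_chain_sum (polylog_term y m) n 0 (q - 1) j / (of_nat j ^ m q * E))) =
        (\<Sum>j<k. polylog_term y m q j * strict_chain_sum (polylog_term y m) n 0 (q - 1) j) / E"
      unfolding sum_divide_distrib
      by (intro sum.cong refl) (use y False Suc.prems in \<open>simp add: polylog_term_def power_divide\<close>)
    also have "(\<Sum>j<k. polylog_term y m q j * strict_chain_sum (polylog_term y m) n 0 (q - 1) j) =
        strict_chain_sum (polylog_term y m) n 0 q k"
      using False by (cases q) auto
    finally show ?thesis using False by (simp add: E_def prod.cl_ivl_Suc mult_ac)
  qed
qed simp

lemma iterated_integral_sums:
  assumes p: "1 \<le> p" and n: "1 \<le> n" and m: "\<forall>i\<in>{1..p}. 1 \<le> m i"
    and x: "0 < norm x" "norm x \<le> 1" and \<sigma>: "\<forall>i\<in>{1..p}. 0 < norm (\<sigma> i) \<and> norm (\<sigma> i) < 1"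
    and y: "\<forall>i\<in>{1..<p}. y i = \<sigma> i / \<sigma> (Suc i)" and y_top: "y p = \<sigma> p * x"
  shows "(\<lambda>k. polylog_term y m p k * strict_chain_sum (polylog_term y m) n 0 (p - 1) k) sums
    (of_nat n * (\<sigma> 1 ^ n * (\<Prod>i=1..p. \<sigma> i)) * iterated_integral x ((\<lambda>t. t ^ (n - 1)) #
      concat (map (\<lambda>i. (\<lambda>t. 1 / (1 - \<sigma> i * t)) # replicate (m i - 1) (\<lambda>t. 1 / t)) [1..<p+1])))"
proof -
  obtain \<rho> where \<rho>: "0 < \<rho>" "\<rho> < 1" and \<sigma>\<rho>: "\<forall>i\<in>{1..p}. norm (\<sigma> i) \<le> \<rho>"
    using uniform_norm_bound_less_1[of "{1..p}" \<sigma>] \<sigma> by auto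
  obtain C where ser: "\<forall>r\<in>{0..1}. itint_aux x (integrands \<sigma> m n p) r =
      (\<Sum>k. itint_coeff \<sigma> m x n p k * of_real r ^ k)"
    and bnd: "\<And>k. norm (itint_coeff \<sigma> m x n p k) \<le> C * \<rho>^k"
    using itint_aux_integrands_powser[OF _ x(2) n \<rho> \<sigma>\<rho>, of m] x(1) by auto
  have "(\<lambda>k. itint_coeff \<sigma> m x n p k) sums
      iterated_integral x ((\<lambda>t. t ^ (n - 1)) #
        concat (map (\<lambda>i. (\<lambda>t. 1 / (1 - \<sigma> i * t)) # replicate (m i - 1) (\<lambda>t. 1 / t)) [1..<p+1]))"
  proof -
    have "iterated_integral x ((\<lambda>t. t ^ (n - 1)) #
        concat (map (\<lambda>i. (\<lambda>t. 1 / (1 - \<sigma> i * t)) # replicate (m i - 1) (\<lambda>t. 1 / t)) [1..<p+1])) =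
        itint_aux x (integrands \<sigma> m n p) 1"
      by (simp only: iterated_integral_def rev_integrand_list)
    then show ?thesis
      using summable_powser_geometric_bound[OF bnd, of 1] ser \<rho> by (simp add: summable_sums)
  qed
  then have "(\<lambda>k. of_nat n * (\<sigma> 1 ^ n * (\<Prod>i=1..p. \<sigma> i)) * itint_coeff \<sigma> m x n p k) sums
      (of_nat n * (\<sigma> 1 ^ n * (\<Prod>i=1..p. \<sigma> i)) * iterated_integral x ((\<lambda>t. t ^ (n - 1)) #
        concat (map (\<lambda>i. (\<lambda>t. 1 / (1 - \<sigma> i * t)) # replicate (m i - 1) (\<lambda>t. 1 / t)) [1..<p+1])))"
    by (rule sums_mult)
  moreover have "of_nat n * (\<sigma> 1 ^ n * (\<Prod>i=1..p. \<sigma> i)) * itint_coeff \<sigma> m x n p k =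
      polylog_term y m p k * strict_chain_sum (polylog_term y m) n 0 (p - 1) k" for k
    using itint_coeff_closed_form[of n p \<sigma> m y p x k] n p m \<sigma> y y_top
    by (simp add: polylog_term_def power_mult_distrib)
  ultimately show ?thesis by (simp only:)
qed

lemma convergent_strict_chain_sum_polylog_term:
  assumes j: "j \<le> p" and x: "norm x \<le> 1" and \<sigma>: "\<forall>i\<in>{1..p}. 0 < norm (\<sigma> i) \<and> norm (\<sigma> i) < 1"
    and y: "\<forall>i\<in>{1..<p}. y i = \<sigma> i / \<sigma> (Suc i)" and y_top: "y p = \<sigma> p * x"
  shows "convergent (\<lambda>N. strict_chain_sum (polylog_term y m) 0 j (p - j) N)"
proof (cases "j = p")
  case True
  have "(\<lambda>N. strict_chain_sum (polylog_term y m) 0 j (p - j) N) \<longlonglongrightarrow> 1"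
    by (rule tendsto_eventually) (use eventually_gt_at_top[of 0] True in \<open>auto elim: eventually_mono\<close>)
  then show ?thesis by (auto simp: convergent_def)
next
  case False
  then obtain d where d: "p = Suc (j + d)" using j by (metis le_neq_implies_less less_iff_Suc_add)
  obtain \<rho> where \<rho>: "0 < \<rho>" "\<rho> < 1" and "\<forall>i\<in>{1..p}. norm (\<sigma> i) \<le> \<rho>"
    using uniform_norm_bound_less_1[of "{1..p}" \<sigma>] \<sigma> by auto
  then have \<sigma>\<rho>: "\<forall>i\<in>{1..p}. 0 < norm (\<sigma> i) \<and> norm (\<sigma> i) \<le> \<rho>" using \<sigma> by auto
  have "norm (polylog_term y m i k) \<le> (norm (\<sigma> i) / norm (\<sigma> (Suc i)))^k" if "i \<in> {Suc j..j+d}" for i k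
  proof -
    have "y i = \<sigma> i / \<sigma> (Suc i)" using that d y by simp
    then show ?thesis using norm_divide_of_nat_power_le[of "y i ^ k" k "m i"]
      by (simp add: polylog_term_def norm_divide norm_power power_divide)
  qed
  moreover have "norm (polylog_term y m p k) \<le> norm (\<sigma> p)^k" for k
  proof -
    have "norm (polylog_term y m p k) \<le> norm ((\<sigma> p * x)^k)"
      by (simp add: polylog_term_def y_top norm_divide_of_nat_power_le)
    also have "\<dots> = (norm (\<sigma> p) * norm x)^k" by (simp add: norm_mult norm_power)
    also have "\<dots> \<le> norm (\<sigma> p)^k" by (intro power_mono mult_left_le) (use x in auto)
    finally show ?thesis .
  qed
  ultimately show ?thesis
    using convergent_strict_chain_sum[of j d "polylog_term y m" "\<lambda>i. norm (\<sigma> i)" \<rho>] \<sigma>\<rho> \<rho> d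
    by auto
qed

lemma strict_chain_sum_tendsto_multi_polylog:
  assumes j: "j \<le> p" and conv: "convergent (\<lambda>N. strict_chain_sum (polylog_term y m) 0 j (p - j) N)"
  shows "(\<lambda>N. strict_chain_sum (polylog_term y m) 0 j (p - j) N) \<longlonglongrightarrow>
    multi_polylog (map m (rev [j+1..<p+1])) (map y (rev [j+1..<p+1]))"
proof -
  obtain L where L: "(\<lambda>N. strict_chain_sum (polylog_term y m) 0 j (p - j) N) \<longlonglongrightarrow> L"
    using conv by (auto simp: convergent_def)
  have "\<forall>\<^sub>F N in sequentially. strict_chain_sum (polylog_term y m) 0 j (p - j) N =
      Li_trunc N (map m (rev [j+1..<p+1])) (map y (rev [j+1..<p+1]))"
    using eventually_gt_at_top[of 0]
    by eventually_elim (use Li_trunc_eq_strict_chain_sum[of _ m j "p - j" y] j in simp)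
  with L have "(\<lambda>N. Li_trunc N (map m (rev [j+1..<p+1])) (map y (rev [j+1..<p+1]))) \<longlonglongrightarrow> L"
    by (rule Lim_transform_eventually)
  with L show ?thesis unfolding multi_polylog_def by (simp only: limI)
qed

lemma alternating_zeta_star_multi_polylog_sums:
  assumes p: "1 \<le> p" and x: "norm x \<le> 1" and \<sigma>: "\<forall>i\<in>{1..p}. 0 < norm (\<sigma> i) \<and> norm (\<sigma> i) < 1"
    and y: "\<forall>i\<in>{1..<p}. y i = \<sigma> i / \<sigma> (Suc i)" and y_top: "y p = \<sigma> p * x"
  shows "(\<lambda>k. polylog_term y m p k * strict_chain_sum (polylog_term y m) n 0 (p - 1) k) sums
    (\<Sum>j=0..p. (-1)^j * zeta_star n (map m [1..<j+1]) (map y [1..<j+1]) *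
       multi_polylog (map m (rev [j+1..<p+1])) (map y (rev [j+1..<p+1])))"
proof -
  obtain q where q: "p = Suc q" using p by (cases p) auto
  have "(\<lambda>N. strict_chain_sum (polylog_term y m) 0 j (p - j) N) \<longlonglongrightarrow>
      multi_polylog (map m (rev [j+1..<p+1])) (map y (rev [j+1..<p+1]))" if "j \<le> p" for j
    using that convergent_strict_chain_sum_polylog_term[OF that x \<sigma> y y_top]
    by (rule strict_chain_sum_tendsto_multi_polylog)
  then have "(\<lambda>k. polylog_term y m (Suc q) k * strict_chain_sum (polylog_term y m) n 0 q k) sums
      (\<Sum>j=0..Suc q. (-1)^j * weak_chain_sum (polylog_term y m) 0 j n *
         multi_polylog (map m (rev [j+1..<p+1])) (map y (rev [j+1..<p+1])))"
    using q by (intro sums_strict_chain_sum_alternating) auto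
  then show ?thesis using q zeta_star_eq_weak_chain_sum[of n m 0 _ y] by simp
qed

theorem mainTheorem2:
  fixes p n :: nat and m :: "nat \<Rightarrow> nat" and x :: complex and \<sigma> :: "nat \<Rightarrow> complex"
  assumes "p \<ge> 1" and "n \<ge> 1" and "\<forall>i\<in>{1..p}. m i \<ge> 1"
    and "0 < norm x" and "norm x \<le> 1"
    and "\<forall>i\<in>{1..p}. 0 < norm (\<sigma> i) \<and> norm (\<sigma> i) < 1"
  shows "(let s = (\<lambda>i. if i = p + 1 then 1 / x else \<sigma> i) in
    of_nat n * iterated_integral x
      ((\<lambda>t. t ^ (n - 1)) #
        concat (map (\<lambda>i. (\<lambda>t. 1 / (1 - \<sigma> i * t)) # replicate (m i - 1) (\<lambda>t. 1 / t)) [1..<p+1]))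
    = (\<Sum>j = 0..p. (-1) ^ j *
         zeta_star n (map m [1..<j+1]) (map (\<lambda>i. s i / s (i + 1)) [1..<j+1]) *
         multi_polylog (map m (rev [j+1..<p+1])) (map (\<lambda>i. s i / s (i + 1)) (rev [j+1..<p+1]))
         / (\<sigma> 1 ^ (n + 1) * (\<Prod>i = 2..p. \<sigma> i))))"
proof -
  define s where "s = (\<lambda>i. if i = p + 1 then 1 / x else \<sigma> i)"
  define y where "y = (\<lambda>i. s i / s (i + 1))"
  have y: "\<forall>i\<in>{1..<p}. y i = \<sigma> i / \<sigma> (Suc i)" and y_top: "y p = \<sigma> p * x"
    using assms(4) by (auto simp: y_def s_def)
  define I where "I = iterated_integral x ((\<lambda>t. t ^ (n - 1)) #
    concat (map (\<lambda>i. (\<lambda>t. 1 / (1 - \<sigma> i * t)) # replicate (m i - 1) (\<lambda>t. 1 / t)) [1..<p+1]))"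
  define R where "R = (\<Sum>j = 0..p. (-1) ^ j * zeta_star n (map m [1..<j+1]) (map y [1..<j+1]) *
    multi_polylog (map m (rev [j+1..<p+1])) (map y (rev [j+1..<p+1])))"
  define D where "D = \<sigma> 1 ^ n * (\<Prod>i = 1..p. \<sigma> i)"
  have "of_nat n * D * I = R"
    unfolding I_def R_def D_def
    by (rule sums_unique2[OF iterated_integral_sums[OF assms y y_top]
        alternating_zeta_star_multi_polylog_sums[OF assms(1,5,6) y y_top]])
  moreover have "\<sigma> 1 ^ (n + 1) * (\<Prod>i = 2..p. \<sigma> i) = D"
    using assms(1) by (simp add: D_def prod.atLeast_Suc_atMost numeral_2_eq_2)
  moreover have "D \<noteq> 0" using assms(1,6) by (auto simp: D_def)
  ultimately show ?thesis
    unfolding Let_def s_def[symmetric] y_def[symmetric] sum_divide_distrib[symmetric]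
      I_def[symmetric] R_def[symmetric]
    by (simp add: field_simps)
qed

end
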